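(* Let $p\in\{3,4,\dots\}$, $a\ge0$, $b>0$ satisfy either ($a>0$ and $b\in[p/2-1,p/2]$) or ($a=0$ and $b\in[p/2-1,p/2)$). For $y>0$ let $N\sim\mathrm{Poisson}(y/2)$. For each $k\in\{1,2,3\}$ there exist a bounded function $\psi_k$ on $(0,\infty)$ and a constant $d_k\in(0,\infty)$ such that $|\psi_k(y)|\le d_k/y$ for all $y>0$ and $$\frac{E[w_k(N)\mid y]}{E[w_{k-1}(N)\mid y]}=\frac p2+2(k-b-1)+\frac y2+\psi_k(y)\quad\text{for all }y>0.$$
   Context: $\mathbb{Z}^+=\{0,1,2,\dots\}$; $g_0(z)=(a+z)^{-b}$; for $n\in\mathbb{Z}^+$ and $k\in\{0,1,2,3\}$, $w_k(n)=\int_0^\infty\frac{g_0(z)(z/2)^{n+p/2+k-1}e^{-z/2}}{2\Gamma(n+p/2)}dz$. $E[\cdot\mid y]$ denotes expectation with $N\sim\mathrm{Poisson}(y/2)$. *)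

theory Defs
  imports "HOL-Analysis.Analysis" "HOL-Probability.Probability"
begin

definition g0 :: "real \<Rightarrow> real \<Rightarrow> real \<Rightarrow> real" where
  "g0 a b z = (a + z) powr (- b)"

definition wk :: "real \<Rightarrow> real \<Rightarrow> nat \<Rightarrow> nat \<Rightarrow> nat \<Rightarrow> real" where
  "wk a b p k n = (LBINT z:{0<..}.
      g0 a b z * (z / 2) powr (real n + real p / 2 + real k - 1) * exp (- z / 2)
      / (2 * Gamma (real n + real p / 2)))"

definition Ew :: "real \<Rightarrow> real \<Rightarrow> nat \<Rightarrow> nat \<Rightarrow> real \<Rightarrow> real" where
  "Ew a b p k y = measure_pmf.expectation (poisson_pmf (y / 2)) (\<lambda>n. wk a b p k n)"

end

theory Submission
  imports Defs "HOL-Real_Asymp.Real_Asymp"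
begin

text \<open>
  Write \<open>c = p/2\<close>. Integrating \<open>g\<^sub>0\<close> by parts against the Gamma density gives
  \<open>(n + c) w\<^sub>0(n + 1) = (n + c - b) w\<^sub>0(n) + O(w\<^sub>0(n) / n)\<close>, and since
  \<open>w\<^sub>k(n) = (n + c) w\<^sub>k\<^sub>-\<^sub>1(n + 1)\<close> every \<open>V = w\<^sub>j\<close> satisfies
  \<open>V(n + 1) / V(n) = 1 + s / (n + c) + O(n\<^sup>-\<^sup>2)\<close> with \<open>s = j - b\<close>.
  Two consecutive steps of this expansion give
  \<open>(n + c) V(n + 1) - n V(n - 1) = (c + 2s) V(n) + O(V(n) / (n + 1))\<close>.
  For \<open>N \<sim> Poisson(l)\<close> one has \<open>E[N f(N - 1)] = l E[f(N)]\<close>, so taking expectations turns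
  \<open>E[w\<^sub>k(N)] = E[(N + c) V(N + 1)]\<close> with \<open>V = w\<^sub>k\<^sub>-\<^sub>1\<close> into
  \<open>(l + c + 2s) E[V(N)]\<close> up to \<open>O(E[V(N) / (N + 1)])\<close>; the last expectation is at most
  \<open>E[V(N)]\<close> and, because \<open>V(n) \<le> L V(n + 1)\<close>, also at most \<open>(L / l) E[V(N)]\<close>.
\<close>

section \<open>Poisson averages\<close>

lemma pmf_poisson_Suc:
  assumes "l > 0"
  shows "pmf (poisson_pmf l) (Suc n) * (real n + 1) = l * pmf (poisson_pmf l) n"
  using assms by (simp add: divide_simps)

lemma expectation_eq_suminf_nat:
  fixes P :: "nat pmf" and f :: "nat \<Rightarrow> real"
  assumes "\<And>n. f n \<ge> 0" and "summable (\<lambda>n. pmf P n * f n)"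
  shows "measure_pmf.expectation P f = (\<Sum>n. pmf P n * f n)"
proof -
  have "measure_pmf.expectation P f = integral\<^sup>L (count_space UNIV) (\<lambda>n. pmf P n * f n)"
    unfolding measure_pmf_eq_density by (subst integral_density) (auto simp: pmf_nonneg)
  also have "\<dots> = (\<Sum>n. pmf P n * f n)"
    using assms by (intro integral_count_space_nat) (simp add: integrable_count_space_nat_iff pmf_nonneg)
  finally show ?thesis .
qed

lemma summable_poisson_mult:
  fixes V :: "nat \<Rightarrow> real"
  assumes l: "l > 0" and V: "\<And>n. V n \<ge> 0" and ratio: "\<And>n. V (Suc n) \<le> R * V n"
  shows "summable (\<lambda>n. pmf (poisson_pmf l) n * V n)"
proof (rule summable_comparison_test')
  have geometric: "V n \<le> V 0 * \<bar>R\<bar> ^ n" for n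
  proof (induction n)
    case (Suc n)
    have "V (Suc n) \<le> \<bar>R\<bar> * V n"
      using order_trans[OF ratio[of n] mult_right_mono[OF abs_ge_self V[of n]]] .
    also have "\<dots> \<le> \<bar>R\<bar> * (V 0 * \<bar>R\<bar> ^ n)"
      using Suc by (intro mult_left_mono) auto
    finally show ?case by (simp add: mult_ac)
  qed simp
  show "summable (\<lambda>n. V 0 * exp (- l) * (inverse (fact n) * (l * \<bar>R\<bar>) ^ n))"
    by (intro summable_mult summable_exp)
  fix n :: nat
  have "norm (pmf (poisson_pmf l) n * V n) = pmf (poisson_pmf l) n * V n"
    using V[of n] by simp
  also have "\<dots> \<le> pmf (poisson_pmf l) n * (V 0 * \<bar>R\<bar> ^ n)"
    using geometric[of n] by (intro mult_left_mono) auto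
  also have "\<dots> = V 0 * exp (- l) * (inverse (fact n) * (l * \<bar>R\<bar>) ^ n)"
    using l by (simp add: power_mult_distrib field_simps)
  finally show "norm (pmf (poisson_pmf l) n * V n)
                  \<le> V 0 * exp (- l) * (inverse (fact n) * (l * \<bar>R\<bar>) ^ n)" .
qed

lemma poisson_sums_mult_pred:
  fixes f :: "nat \<Rightarrow> real"
  assumes l: "l > 0" and F: "(\<lambda>n. pmf (poisson_pmf l) n * f n) sums F"
  shows "(\<lambda>n. pmf (poisson_pmf l) n * (real n * f (n - 1))) sums (l * F)"
proof -
  have "(\<lambda>n. pmf (poisson_pmf l) (Suc n) * (real (Suc n) * f (Suc n - 1)))
      = (\<lambda>n. l * (pmf (poisson_pmf l) n * f n))"
    using pmf_poisson_Suc[OF l] by (simp add: mult.assoc[symmetric] add.commute)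
  then have "(\<lambda>n. pmf (poisson_pmf l) (Suc n) * (real (Suc n) * f (Suc n - 1))) sums (l * F)"
    using sums_mult[OF F] by simp
  then show ?thesis by (subst (asm) sums_Suc_iff) simp
qed

lemma poisson_suminf_div_Suc_le:
  fixes V :: "nat \<Rightarrow> real"
  assumes l: "l > 0" and V: "\<And>n. V n \<ge> 0"
    and sV: "summable (\<lambda>n. pmf (poisson_pmf l) n * V n)"
    and L: "L \<ge> 0" and ratio: "\<And>n. V n \<le> L * V (Suc n)"
  shows "summable (\<lambda>n. pmf (poisson_pmf l) n * (V n / (real n + 1)))"
    and "(\<Sum>n. pmf (poisson_pmf l) n * (V n / (real n + 1))) \<le> (\<Sum>n. pmf (poisson_pmf l) n * V n)"
    and "(\<Sum>n. pmf (poisson_pmf l) n * (V n / (real n + 1))) \<le> L / l * (\<Sum>n. pmf (poisson_pmf l) n * V n)"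
proof -
  define \<pi> where "\<pi> = pmf (poisson_pmf l)"
  have \<pi>_nonneg: "\<pi> n \<ge> 0" for n
    unfolding \<pi>_def by simp
  have le: "\<pi> n * (V n / (real n + 1)) \<le> \<pi> n * V n" for n
    using V[of n] by (intro mult_left_mono divide_left_mono[of 1, simplified]) (auto simp: \<pi>_def)
  show s: "summable (\<lambda>n. \<pi> n * (V n / (real n + 1)))"
    using le V sV by (intro summable_comparison_test'[OF sV]) (simp add: \<pi>_def)
  show "(\<Sum>n. \<pi> n * (V n / (real n + 1))) \<le> (\<Sum>n. \<pi> n * V n)"
    using le s sV by (intro suminf_le) (auto simp: \<pi>_def)
  have sS: "summable (\<lambda>n. \<pi> (Suc n) * V (Suc n))"
    using sV unfolding \<pi>_def by (subst summable_Suc_iff)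
  have "\<pi> n * (V n / (real n + 1)) = \<pi> (Suc n) * V n / l" for n
  proof -
    have "\<pi> (Suc n) * (real n + 1) = l * \<pi> n"
      unfolding \<pi>_def by (rule pmf_poisson_Suc[OF l])
    then show ?thesis using l by (simp add: field_simps)
  qed
  also have "\<pi> (Suc n) * V n / l \<le> L / l * (\<pi> (Suc n) * V (Suc n))" for n
    using mult_left_mono[OF ratio[of n] \<pi>_nonneg[of "Suc n"]] l by (simp add: field_simps)
  finally have "(\<Sum>n. \<pi> n * (V n / (real n + 1))) \<le> (\<Sum>n. L / l * (\<pi> (Suc n) * V (Suc n)))"
    using s sS by (intro suminf_le) auto
  also have "\<dots> = L / l * ((\<Sum>n. \<pi> n * V n) - \<pi> 0 * V 0)"
    using sS suminf_split_head[OF sV[folded \<pi>_def]] by (simp only: suminf_mult)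
  also have "\<dots> \<le> L / l * (\<Sum>n. \<pi> n * V n)"
    using L V[of 0] l by (intro mult_left_mono) (auto simp: \<pi>_def)
  finally show "(\<Sum>n. \<pi> n * (V n / (real n + 1))) \<le> L / l * (\<Sum>n. \<pi> n * V n)" .
qed

lemma poisson_suminf_defect_bound:
  fixes V W :: "nat \<Rightarrow> real"
  assumes l: "l > 0"
    and sV: "summable (\<lambda>n. pmf (poisson_pmf l) n * V n)"
    and sW: "summable (\<lambda>n. pmf (poisson_pmf l) n * W n)"
    and sT: "summable (\<lambda>n. pmf (poisson_pmf l) n * (V n / (real n + 1)))"
    and err: "\<And>n. \<bar>W n - real n * V (n - 1) - C * V n\<bar> \<le> M * V n / (real n + 1)"
  shows "\<bar>(\<Sum>n. pmf (poisson_pmf l) n * W n) - (l + C) * (\<Sum>n. pmf (poisson_pmf l) n * V n)\<bar>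
           \<le> M * (\<Sum>n. pmf (poisson_pmf l) n * (V n / (real n + 1)))"
proof -
  define \<pi> where "\<pi> = pmf (poisson_pmf l)"
  define e where "e n = W n - real n * V (n - 1) - C * V n" for n
  have "(\<lambda>n. \<pi> n * W n - \<pi> n * (real n * V (n - 1)) - C * (\<pi> n * V n))
          sums ((\<Sum>n. \<pi> n * W n) - l * (\<Sum>n. \<pi> n * V n) - C * (\<Sum>n. \<pi> n * V n))"
    using sW sV poisson_sums_mult_pred[OF l summable_sums[OF sV]]
    unfolding \<pi>_def by (intro sums_diff sums_mult summable_sums)
  then have sums_e: "(\<lambda>n. \<pi> n * e n) sums ((\<Sum>n. \<pi> n * W n) - (l + C) * (\<Sum>n. \<pi> n * V n))"
    unfolding e_def by (simp add: algebra_simps)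
  from sT have sT: "summable (\<lambda>n. \<pi> n * (V n / (real n + 1)))"
    unfolding \<pi>_def .
  have e_bound: "\<bar>\<pi> n * e n\<bar> \<le> M * (\<pi> n * (V n / (real n + 1)))" for n
  proof -
    have "\<pi> n \<ge> 0"
      unfolding \<pi>_def by (rule pmf_nonneg)
    then show ?thesis
      using mult_left_mono[OF err[of n, folded e_def] \<open>\<pi> n \<ge> 0\<close>] by (simp add: abs_mult mult_ac)
  qed
  have summable_abs_e: "summable (\<lambda>n. \<bar>\<pi> n * e n\<bar>)"
    using e_bound by (intro summable_comparison_test'[OF summable_mult[OF sT]]) auto
  have "\<bar>(\<Sum>n. \<pi> n * W n) - (l + C) * (\<Sum>n. \<pi> n * V n)\<bar> \<le> (\<Sum>n. \<bar>\<pi> n * e n\<bar>)"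
    using summable_rabs[OF summable_abs_e] sums_unique[OF sums_e] by simp
  also have "\<dots> \<le> (\<Sum>n. M * (\<pi> n * (V n / (real n + 1))))"
    by (intro suminf_le e_bound summable_abs_e summable_mult sT)
  also have "\<dots> = M * (\<Sum>n. \<pi> n * (V n / (real n + 1)))"
    by (rule suminf_mult[OF sT])
  finally show ?thesis
    unfolding \<pi>_def .
qed

lemma poisson_ratio_estimate:
  fixes V W :: "nat \<Rightarrow> real"
  assumes l: "l > 0" and V: "\<And>n. V n > 0"
    and sV: "summable (\<lambda>n. pmf (poisson_pmf l) n * V n)"
    and sW: "summable (\<lambda>n. pmf (poisson_pmf l) n * W n)"
    and L: "L \<ge> 0" and ratio: "\<And>n. V n \<le> L * V (Suc n)"
    and err: "\<And>n. \<bar>W n - real n * V (n - 1) - C * V n\<bar> \<le> M * V n / (real n + 1)"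
  shows "\<bar>(\<Sum>n. pmf (poisson_pmf l) n * W n) / (\<Sum>n. pmf (poisson_pmf l) n * V n) - (l + C)\<bar> \<le> M"
    and "\<bar>(\<Sum>n. pmf (poisson_pmf l) n * W n) / (\<Sum>n. pmf (poisson_pmf l) n * V n) - (l + C)\<bar> \<le> M * L / l"
proof -
  define F where "F = (\<Sum>n. pmf (poisson_pmf l) n * V n)"
  define G where "G = (\<Sum>n. pmf (poisson_pmf l) n * W n)"
  define T where "T = (\<Sum>n. pmf (poisson_pmf l) n * (V n / (real n + 1)))"
  have "0 \<le> M * V 0"
    using order_trans[OF abs_ge_zero err[of 0]] by simp
  then have M: "M \<ge> 0"
    using V[of 0] by (simp add: zero_le_mult_iff)
  have F: "F > 0"
    unfolding F_def using sV V l by (intro suminf_pos) auto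
  have sT: "summable (\<lambda>n. pmf (poisson_pmf l) n * (V n / (real n + 1)))" and T: "T \<le> F" "T \<le> L / l * F"
    using poisson_suminf_div_Suc_le[OF l less_imp_le[OF V] sV L ratio] unfolding T_def F_def by auto
  have "G / F - (l + C) = (G - (l + C) * F) / F"
    using F by (simp add: diff_divide_distrib)
  then have "\<bar>G / F - (l + C)\<bar> = \<bar>G - (l + C) * F\<bar> / F"
    using F by simp
  also have "\<dots> \<le> M * (T / F)"
    using poisson_suminf_defect_bound[OF l sV sW sT err] F
    unfolding F_def[symmetric] G_def[symmetric] T_def[symmetric] by (simp add: divide_right_mono)
  finally have "\<bar>G / F - (l + C)\<bar> \<le> M * (T / F)" .
  moreover have "M * (T / F) \<le> M * 1" "M * (T / F) \<le> M * (L / l)"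
    using T F M by (intro mult_left_mono; simp add: divide_le_eq)+
  ultimately have "\<bar>G / F - (l + C)\<bar> \<le> M" "\<bar>G / F - (l + C)\<bar> \<le> M * L / l"
    by simp_all
  then show "\<bar>(\<Sum>n. pmf (poisson_pmf l) n * W n) / (\<Sum>n. pmf (poisson_pmf l) n * V n) - (l + C)\<bar> \<le> M"
    and "\<bar>(\<Sum>n. pmf (poisson_pmf l) n * W n) / (\<Sum>n. pmf (poisson_pmf l) n * V n) - (l + C)\<bar> \<le> M * L / l"
    unfolding G_def F_def .
qed

section \<open>Sequences with a ratio expansion\<close>

lemma eventually_bound_imp_bound:
  fixes f :: "nat \<Rightarrow> real"
  assumes "\<forall>\<^sub>F n in sequentially. f n \<le> B"
  obtains M where "M > 0" and "\<And>n. f n \<le> M"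
proof -
  from assms obtain N where N: "\<And>n. n \<ge> N \<Longrightarrow> f n \<le> B"
    by (auto simp: eventually_sequentially)
  define M where "M = max B 1 + (\<Sum>i<N. \<bar>f i\<bar>)"
  have S: "(\<Sum>i<N. \<bar>f i\<bar>) \<ge> 0"
    by (simp add: sum_nonneg)
  have "f n \<le> M" for n
  proof (cases "n \<ge> N")
    case True
    then show ?thesis using N[of n] S unfolding M_def by linarith
  next
    case False
    then have "\<bar>f n\<bar> \<le> (\<Sum>i<N. \<bar>f i\<bar>)"
      by (intro member_le_sum) auto
    then show ?thesis unfolding M_def by linarith
  qed
  moreover have "M > 0"
    unfolding M_def using S by linarith
  ultimately show ?thesis using that by blast
qed

definition ratio_residual :: "(nat \<Rightarrow> real) \<Rightarrow> real \<Rightarrow> real \<Rightarrow> nat \<Rightarrow> real" where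
  "ratio_residual V c s n = (real n + c) * V (Suc n) - (real n + c + s) * V n"

(* V (n + 1) / V n = 1 + s / (n + c) + O(1 / n\<^sup>2) *)
definition ratio_expansion :: "(nat \<Rightarrow> real) \<Rightarrow> real \<Rightarrow> real \<Rightarrow> bool" where
  "ratio_expansion V c s \<longleftrightarrow> (\<forall>n. V n > 0) \<and>
     (\<exists>K \<ge> 0. \<forall>\<^sub>F n in sequentially. \<bar>ratio_residual V c s n\<bar> \<le> K * V n / (real n + c))"

lemma ratio_residual_shift:
  "ratio_residual (\<lambda>n. (real n + c) * V (Suc n)) c (s + 1) n = (real n + c) * ratio_residual V c s (Suc n)"
  unfolding ratio_residual_def by (simp add: algebra_simps)

lemma ratio_expansion_shift:
  assumes c: "c > 0" and V: "ratio_expansion V c s"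
  shows "ratio_expansion (\<lambda>n. (real n + c) * V (Suc n)) c (s + 1)"
proof -
  from V obtain K where pos: "\<And>n. V n > 0" and K: "K \<ge> 0"
    and ev: "\<forall>\<^sub>F n in sequentially. \<bar>ratio_residual V c s n\<bar> \<le> K * V n / (real n + c)"
    unfolding ratio_expansion_def by blast
  have "\<bar>ratio_residual (\<lambda>n. (real n + c) * V (Suc n)) c (s + 1) n\<bar>
          \<le> K * ((real n + c) * V (Suc n)) / (real n + c)"
    if bound: "\<bar>ratio_residual V c s (Suc n)\<bar> \<le> K * V (Suc n) / (real (Suc n) + c)" for n
  proof -
    have x: "real n + c > 0"
      using c by simp
    have "\<bar>ratio_residual (\<lambda>n. (real n + c) * V (Suc n)) c (s + 1) n\<bar>
          = (real n + c) * \<bar>ratio_residual V c s (Suc n)\<bar>"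
      using x by (simp add: ratio_residual_shift abs_mult)
    also have "\<dots> \<le> (real n + c) * (K * V (Suc n) / (real (Suc n) + c))"
      using bound x by (intro mult_left_mono) auto
    also have "\<dots> \<le> (real n + c) * (K * V (Suc n) / (real n + c))"
      using x K pos[of "Suc n"] by (intro mult_left_mono divide_left_mono) auto
    also have "\<dots> = K * ((real n + c) * V (Suc n)) / (real n + c)"
      by simp
    finally show ?thesis .
  qed
  moreover have "\<forall>\<^sub>F n in sequentially.
      \<bar>ratio_residual V c s (Suc n)\<bar> \<le> K * V (Suc n) / (real (Suc n) + c)"
    using ev by (rule eventually_sequentially_Suc[THEN iffD2])
  moreover have "(real n + c) * V (Suc n) > 0" for n
    using c pos[of "Suc n"] by simp
  ultimately show ?thesis
    unfolding ratio_expansion_def using K by (blast intro: eventually_mono)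
qed

lemma ratio_expansion_ratio_bounded:
  assumes "ratio_expansion V c s"
  obtains L where "L > 0" and "\<And>n. V n \<le> L * V (Suc n)" and "\<And>n. V (Suc n) \<le> L * V n"
proof -
  from assms obtain K where pos: "\<And>n. V n > 0" and K: "K \<ge> 0"
    and ev: "\<forall>\<^sub>F n in sequentially. \<bar>ratio_residual V c s n\<bar> \<le> K * V n / (real n + c)"
    unfolding ratio_expansion_def by blast
  have "\<forall>\<^sub>F n in sequentially. real n + c \<ge> 2 * (K + \<bar>s\<bar>) + 1"
    by real_asymp
  with ev have "\<forall>\<^sub>F n in sequentially. max (V n / V (Suc n)) (V (Suc n) / V n) \<le> 2"
  proof eventually_elim
    case (elim n)
    define x where "x = real n + c"
    have x: "x \<ge> 1" "x \<ge> 2 * (K + \<bar>s\<bar>)"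
      using elim(2) K unfolding x_def by auto
    have "K * V n \<ge> 0"
      using K pos[of n] by simp
    then have "K * V n / x \<le> K * V n"
      using x by (simp add: divide_le_eq mult_le_cancel_left1)
    then have close: "\<bar>x * V (Suc n) - (x + s) * V n\<bar> \<le> K * V n"
      using elim(1) unfolding x_def ratio_residual_def by linarith
    have "x / 2 * V n \<le> (x + s - K) * V n"
      using x pos[of n] by (intro mult_right_mono) auto
    moreover have "(x + s + K) * V n \<le> 2 * x * V n"
      using x pos[of n] by (intro mult_right_mono) auto
    ultimately have "x * V n \<le> x * (2 * V (Suc n))" "x * V (Suc n) \<le> x * (2 * V n)"
      using close by (auto simp: abs_le_iff algebra_simps)
    then have "V n \<le> 2 * V (Suc n)" "V (Suc n) \<le> 2 * V n"
      using x by simp_all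
    then show ?case
      using pos[of n] pos[of "Suc n"] by (simp add: divide_le_eq)
  qed
  then obtain L where L: "L > 0" "\<And>n. max (V n / V (Suc n)) (V (Suc n) / V n) \<le> L"
    by (rule eventually_bound_imp_bound) blast
  have "V n \<le> L * V (Suc n)" "V (Suc n) \<le> L * V n" for n
    using L(2)[of n] pos[of n] pos[of "Suc n"] by (simp_all add: divide_le_eq)
  with L(1) show ?thesis using that by blast
qed

lemma second_difference_identity:
  fixes V :: "nat \<Rightarrow> real"
  assumes "n \<ge> 1"
  shows "(real n - 1 + c + s) * ((real n + c) * V (Suc n) - real n * V (n - 1) - (c + 2 * s) * V n)
       = s * (1 - c - s) * V n + (real n - 1 + c + s) * ratio_residual V c s n
         + real n * ratio_residual V c s (n - 1)"
proof -
  obtain m where "n = Suc m"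
    using assms by (cases n) auto
  then show ?thesis
    unfolding ratio_residual_def by (simp add: algebra_simps)
qed

lemma second_difference_bound:
  fixes V :: "nat \<Rightarrow> real" and n :: nat and c s K L :: real
  defines "q \<equiv> real n - 1 + c"
  assumes n: "n \<ge> 1" and pos: "V n > 0" "V (n - 1) > 0" and K: "K \<ge> 0"
    and r: "\<bar>ratio_residual V c s n\<bar> \<le> K * V n / (real n + c)"
    and r_pred: "\<bar>ratio_residual V c s (n - 1)\<bar> \<le> K * V (n - 1) / q"
    and ratio: "V (n - 1) \<le> L * V n"
    and large: "(real n + 1) / 2 \<le> q + s" "q + s \<le> 2 * (real n + c)" "real n \<le> 2 * q"
  shows "(real n + 1) * \<bar>(real n + c) * V (Suc n) - real n * V (n - 1) - (c + 2 * s) * V n\<bar>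
           \<le> 2 * (\<bar>s * (1 - c - s)\<bar> + 2 * K + 2 * K * L) * V n"
proof -
  define e where "e = (real n + c) * V (Suc n) - real n * V (n - 1) - (c + 2 * s) * V n"
  have qs: "q + s > 0" and q: "q > 0" and x: "real n + c > 0"
    using large n unfolding q_def by (auto intro: less_le_trans[of 0 "(real n + 1) / 2"])
  have "(q + s) * \<bar>ratio_residual V c s n\<bar> \<le> (q + s) * (K * V n / (real n + c))"
    using r qs by (intro mult_left_mono) auto
  also have "\<dots> \<le> 2 * (real n + c) * (K * V n / (real n + c))"
    using large(2) K pos x by (intro mult_right_mono) auto
  also have "\<dots> = 2 * K * V n"
    using x by (simp add: field_simps)
  finally have r_bound: "(q + s) * \<bar>ratio_residual V c s n\<bar> \<le> 2 * K * V n" .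
  have "real n * \<bar>ratio_residual V c s (n - 1)\<bar> \<le> 2 * q * (K * V (n - 1) / q)"
    using r_pred large(3) K pos q by (intro mult_mono) auto
  also have "\<dots> \<le> 2 * K * (L * V n)"
    using ratio K q by (simp add: mult_left_mono)
  finally have r_pred_bound: "real n * \<bar>ratio_residual V c s (n - 1)\<bar> \<le> 2 * K * L * V n"
    by (simp add: mult_ac)
  have "(q + s) * \<bar>e\<bar> = \<bar>s * (1 - c - s) * V n + (q + s) * ratio_residual V c s n
                              + real n * ratio_residual V c s (n - 1)\<bar>"
    using second_difference_identity[OF n, of c s V] qs unfolding e_def q_def
    by (metis abs_mult abs_of_pos)
  also have "\<dots> \<le> \<bar>s * (1 - c - s) * V n\<bar> + \<bar>(q + s) * ratio_residual V c s n\<bar>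
                   + \<bar>real n * ratio_residual V c s (n - 1)\<bar>"
    by (rule order_trans[OF abs_triangle_ineq add_right_mono[OF abs_triangle_ineq]])
  also have "\<dots> = \<bar>s * (1 - c - s)\<bar> * V n + (q + s) * \<bar>ratio_residual V c s n\<bar>
                   + real n * \<bar>ratio_residual V c s (n - 1)\<bar>"
    using qs pos by (simp add: abs_mult)
  also have "\<dots> \<le> (\<bar>s * (1 - c - s)\<bar> + 2 * K + 2 * K * L) * V n"
    using r_bound r_pred_bound by (simp add: algebra_simps)
  finally have "(q + s) * \<bar>e\<bar> \<le> (\<bar>s * (1 - c - s)\<bar> + 2 * K + 2 * K * L) * V n" .
  moreover have "(real n + 1) / 2 * \<bar>e\<bar> \<le> (q + s) * \<bar>e\<bar>"
    using large(1) by (intro mult_right_mono) auto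
  ultimately show ?thesis
    unfolding e_def by linarith
qed

lemma ratio_expansion_second_order:
  assumes "ratio_expansion V c s"
  obtains M where "M > 0" and "\<And>n. \<bar>(real n + c) * V (Suc n) - real n * V (n - 1) - (c + 2 * s) * V n\<bar>
                                  \<le> M * V n / (real n + 1)"
proof -
  define e where "e n = (real n + c) * V (Suc n) - real n * V (n - 1) - (c + 2 * s) * V n" for n
  from assms obtain K where pos: "\<And>n. V n > 0" and K: "K \<ge> 0"
    and ev: "\<forall>\<^sub>F n in sequentially. \<bar>ratio_residual V c s n\<bar> \<le> K * V n / (real n + c)"
    unfolding ratio_expansion_def by blast
  obtain L where L: "\<And>n. V n \<le> L * V (Suc n)"
    using ratio_expansion_ratio_bounded[OF assms] by metis
  define A where "A = \<bar>s * (1 - c - s)\<bar> + 2 * K + 2 * K * L"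
  have "\<forall>\<^sub>F n in sequentially.
          \<bar>ratio_residual V c s (Suc n - 1)\<bar> \<le> K * V (Suc n - 1) / (real (Suc n) - 1 + c)"
    using ev by simp
  then have "\<forall>\<^sub>F n in sequentially.
               \<bar>ratio_residual V c s (n - 1)\<bar> \<le> K * V (n - 1) / (real n - 1 + c)"
    by (rule eventually_sequentially_Suc[THEN iffD1])
  moreover note ev
  moreover have "\<forall>\<^sub>F n in sequentially. n \<ge> 1"
    by (rule eventually_ge_at_top)
  moreover have "\<forall>\<^sub>F n in sequentially. real n - 1 + c + s \<ge> (real n + 1) / 2"
    by real_asymp
  moreover have "\<forall>\<^sub>F n in sequentially. real n - 1 + c + s \<le> 2 * (real n + c)"
    by real_asymp
  moreover have "\<forall>\<^sub>F n in sequentially. real n \<le> 2 * (real n - 1 + c)"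
    by real_asymp
  ultimately have "\<forall>\<^sub>F n in sequentially. \<bar>e n\<bar> * (real n + 1) / V n \<le> 2 * A"
  proof eventually_elim
    case (elim n)
    have ratio: "V (n - 1) \<le> L * V n"
      using L[of "n - 1"] elim(3) by simp
    have "(real n + 1) * \<bar>e n\<bar> \<le> 2 * A * V n"
      unfolding e_def A_def by (rule second_difference_bound) (use ratio elim pos K in auto)
    then show ?case
      using pos[of n] by (simp add: divide_le_eq mult.commute)
  qed
  then obtain M where "M > 0" "\<And>n. \<bar>e n\<bar> * (real n + 1) / V n \<le> M"
    by (rule eventually_bound_imp_bound) blast
  moreover have "\<bar>e n\<bar> \<le> M * V n / (real n + 1) \<longleftrightarrow> \<bar>e n\<bar> * (real n + 1) / V n \<le> M" for n
    using pos[of n] by (simp add: field_simps)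
  ultimately show ?thesis
    using that unfolding e_def by blast
qed

section \<open>Moments of \<open>g\<^sub>0\<close>\<close>

lemma powr_eq_mult_powr_diff_one: "0 \<le> x \<Longrightarrow> x powr e = x * x powr (e - 1)"
  for x e :: real
  using powr_mult_base[of x "e - 1"] by simp

lemma g0_eq_mult_g0_plus_one: "0 \<le> a + z \<Longrightarrow> g0 a b z = (a + z) * g0 a (b + 1) z"
  unfolding g0_def using powr_mult_base[of "a + z" "- (b + 1)"] by simp

lemma set_integral_derivative_vanishing_at_ends:
  fixes F f :: "real \<Rightarrow> real"
  assumes deriv: "\<And>z. z > 0 \<Longrightarrow> (F has_real_derivative f z) (at z)"
    and cont: "\<And>z. z > 0 \<Longrightarrow> isCont f z"
    and integrable: "set_integrable lborel {0<..} f"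
    and lim_0: "(F \<longlongrightarrow> 0) (at_right 0)" and lim_top: "(F \<longlongrightarrow> 0) at_top"
  shows "(LBINT z:{0<..}. f z) = 0"
proof -
  have "(LBINT z=ereal 0..\<infinity>. f z) = 0 - 0"
  proof (rule interval_integral_FTC_integrable[where F = F])
    show "(F has_vector_derivative f z) (at z)" if "ereal 0 < ereal z" "ereal z < \<infinity>" for z
      using deriv[of z] that by (simp add: has_real_derivative_iff_has_vector_derivative)
    show "isCont f z" if "ereal 0 < ereal z" "ereal z < \<infinity>" for z
      using cont[of z] that by simp
    show "set_integrable lborel (einterval (ereal 0) \<infinity>) f"
      using integrable by (simp add: einterval_def greaterThan_def)
    show "((F \<circ> real_of_ereal) \<longlongrightarrow> 0) (at_right (ereal 0))"
      using lim_0 by (simp add: ereal_tendsto_simps1)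
    show "((F \<circ> real_of_ereal) \<longlongrightarrow> 0) (at_left \<infinity>)"
      using lim_top by (simp add: ereal_tendsto_simps1)
  qed simp
  then show ?thesis
    using interval_lebesgue_integral_0_infty(2)[of lborel f] by (simp add: zero_ereal_def)
qed

lemma set_integrable_powr_exp_half:
  fixes e :: real
  assumes "e > -1"
  shows "set_integrable lborel {0<..} (\<lambda>z. (z / 2) powr e * exp (- z / 2))"
proof -
  have "(\<integral>\<^sup>+t. ennreal (indicator {0..} t * t powr e / exp t) \<partial>lborel) = ennreal (Gamma (e + 1))"
    using Gamma_conv_nn_integral_real[of "e + 1"] assms by simp
  then have "integrable lborel (\<lambda>t::real. indicator {0..} t * t powr e / exp t)"
    by (intro integrableI_nonneg) (auto intro!: AE_I2 simp: indicator_def)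
  then have "integrable lborel (\<lambda>z::real. indicator {0..} (z / 2) * (z / 2) powr e / exp (z / 2))"
    using lborel_integrable_real_affine_iff[of "1/2" "\<lambda>t::real. indicator {0..} t * t powr e / exp t" 0]
    by simp
  then have "integrable lborel (\<lambda>z::real. indicator {0<..} z * ((z / 2) powr e * exp (- z / 2)))"
    by (rule Bochner_Integration.integrable_bound)
       (auto intro!: AE_I2 simp: indicator_def exp_minus field_simps)
  then show ?thesis
    unfolding set_integrable_def by simp
qed

definition g0_integrand :: "real \<Rightarrow> real \<Rightarrow> real \<Rightarrow> real \<Rightarrow> real" where
  "g0_integrand a b e z = g0 a b z * (z / 2) powr e * exp (- z / 2)"

definition g0_moment :: "real \<Rightarrow> real \<Rightarrow> real \<Rightarrow> real" where
  "g0_moment a b e = (LBINT z:{0<..}. g0_integrand a b e z)"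

lemma g0_integrand_measurable [measurable]: "g0_integrand a b e \<in> borel_measurable borel"
  unfolding g0_integrand_def g0_def by measurable

lemma g0_integrand_pos: "a \<ge> 0 \<Longrightarrow> z > 0 \<Longrightarrow> g0_integrand a b e z > 0"
  unfolding g0_integrand_def g0_def by simp

lemma set_integrable_g0_integrand:
  assumes a: "a \<ge> 0" and b: "b \<ge> 0" and e: "e > -1" and ae: "a > 0 \<or> e - b > -1"
  shows "set_integrable lborel {0<..} (g0_integrand a b e)"
proof -
  have dominated: "set_integrable lborel {0<..} (g0_integrand a b e)"
    if e': "e' > -1" and bound: "\<And>z. z > 0 \<Longrightarrow> g0 a b z \<le> C * (z / 2) powr (e' - e)" for C e'
  proof (rule set_integrable_bound)
    show "set_integrable lborel {0<..} (\<lambda>z. C * ((z / 2) powr e' * exp (- z / 2)))"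
      using set_integrable_powr_exp_half[OF e'] by simp
    show "AE z in lborel. z \<in> {0<..} \<longrightarrow>
            norm (g0_integrand a b e z) \<le> norm (C * ((z / 2) powr e' * exp (- z / 2)))"
    proof (intro AE_I2 impI)
      fix z :: real
      assume "z \<in> {0<..}"
      then have z: "z > 0"
        by simp
      have "g0_integrand a b e z \<le> C * (z / 2) powr (e' - e) * (z / 2) powr e * exp (- z / 2)"
        unfolding g0_integrand_def using bound[OF z] by (intro mult_right_mono) auto
      also have "\<dots> = C * ((z / 2) powr e' * exp (- z / 2))"
        using z by (simp add: powr_add[symmetric])
      finally show "norm (g0_integrand a b e z) \<le> norm (C * ((z / 2) powr e' * exp (- z / 2)))"
        using g0_integrand_pos[OF a z, of b e] by simp
    qed
  qed (simp add: set_borel_measurable_def)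
  from ae show ?thesis
  proof
    assume "a > 0"
    then show ?thesis
      using e b by (intro dominated[of e "a powr (- b)"]) (auto simp: g0_def intro: powr_mono2')
  next
    assume "e - b > -1"
    moreover have "(a + z) powr (- b) \<le> 2 powr (- b) * (z / 2) powr (- b)" if "z > 0" for z
      using a b that powr_mono2'[of "- b" z "a + z"] by (simp add: powr_divide)
    ultimately show ?thesis
      by (intro dominated[of "e - b" "2 powr (- b)"]) (auto simp: g0_def)
  qed
qed

lemma g0_moment_nonneg: "a \<ge> 0 \<Longrightarrow> g0_moment a b e \<ge> 0"
  unfolding g0_moment_def set_lebesgue_integral_def
  by (intro integral_nonneg_AE AE_I2) (simp add: indicator_def g0_integrand_pos less_imp_le)

lemma g0_moment_pos:
  assumes "a \<ge> 0" and "b \<ge> 0" and "e > -1" and "a > 0 \<or> e - b > -1"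
  shows "g0_moment a b e > 0"
proof -
  have integrable: "integrable lborel (\<lambda>z. indicator {0<..} z * g0_integrand a b e z)"
    using set_integrable_g0_integrand[OF assms] unfolding set_integrable_def by simp
  have nonneg: "AE z in lborel. 0 \<le> indicator {0<..} z * g0_integrand a b e z"
    using assms(1) by (intro AE_I2) (simp add: indicator_def g0_integrand_pos less_imp_le)
  have "g0_moment a b e \<noteq> 0"
  proof
    assume "g0_moment a b e = 0"
    then have "AE z in lborel. indicator {0<..} z * g0_integrand a b e z = 0"
      using integral_nonneg_eq_0_iff_AE[OF integrable nonneg]
      unfolding g0_moment_def set_lebesgue_integral_def by simp
    then have "AE z in lborel. z \<notin> {0<..<1::real}"
      by (rule AE_mp) (auto intro!: AE_I2 simp: indicator_def g0_integrand_pos[OF assms(1)] less_imp_neq[symmetric])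
    then have "emeasure lborel {0<..<1::real} = 0"
      by (subst (asm) AE_iff_measurable[of "{0<..<1}"]) auto
    then show False
      by simp
  qed
  then show ?thesis
    using g0_moment_nonneg[OF assms(1), of b e] by linarith
qed

lemma g0_integrand_has_real_derivative:
  assumes "a \<ge> 0" and "z > 0"
  shows "(g0_integrand a b m has_real_derivative
            (m - b) / 2 * g0_integrand a b (m - 1) z - g0_integrand a b m z / 2
            + a * b / 2 * g0_integrand a (b + 1) (m - 1) z) (at z)"
proof -
  have az: "a + z > 0"
    using assms by simp
  have "(g0_integrand a b m has_real_derivative
          - b * (a + z) powr (- b - 1) * (z / 2) powr m * exp (- z / 2)
          + (a + z) powr (- b) * (m * (z / 2) powr (m - 1) * (1 / 2)) * exp (- z / 2)
          + (a + z) powr (- b) * (z / 2) powr m * (exp (- z / 2) * (- 1 / 2))) (at z)"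
    unfolding g0_integrand_def[abs_def] g0_def using az assms(2)
    by (auto intro!: derivative_eq_intros simp: field_simps)
  moreover have "- b * (a + z) powr (- b - 1) * (z / 2) powr m * exp (- z / 2)
          + (a + z) powr (- b) * (m * (z / 2) powr (m - 1) * (1 / 2)) * exp (- z / 2)
          + (a + z) powr (- b) * (z / 2) powr m * (exp (- z / 2) * (- 1 / 2))
        = (m - b) / 2 * g0_integrand a b (m - 1) z - g0_integrand a b m z / 2
            + a * b / 2 * g0_integrand a (b + 1) (m - 1) z"
  proof -
    have "(z / 2) powr m = (z / 2) * (z / 2) powr (m - 1)"
      using assms(2) by (intro powr_eq_mult_powr_diff_one) simp
    moreover have "(a + z) powr (- b) = (a + z) * (a + z) powr (- b - 1)"
      using powr_eq_mult_powr_diff_one[of "a + z" "- b"] az by simp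
    moreover have "(a + z) powr (- (b + 1)) = (a + z) powr (- b - 1)"
      by (rule arg_cong[where f = "\<lambda>t. (a + z) powr t"]) simp
    ultimately show ?thesis
      unfolding g0_integrand_def g0_def by (simp add: field_simps)
  qed
  ultimately show ?thesis
    by simp
qed

lemma g0_integrand_tendsto_zero:
  assumes a: "a \<ge> 0" and m: "m > 0" and am: "a > 0 \<or> m > b"
  shows "(g0_integrand a b m \<longlongrightarrow> 0) (at_right 0)" and "(g0_integrand a b m \<longlongrightarrow> 0) at_top"
proof -
  show "(g0_integrand a b m \<longlongrightarrow> 0) (at_right 0)"
  proof (cases "a = 0")
    case True
    then have "m - b > 0"
      using am by simp
    then have "((\<lambda>z::real. z powr (- b) * (z / 2) powr m * exp (- z / 2)) \<longlongrightarrow> 0) (at_right 0)"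
      by real_asymp
    then show ?thesis
      unfolding g0_integrand_def[abs_def] g0_def True by simp
  next
    case False
    with a have "a > 0"
      by simp
    then show ?thesis
      unfolding g0_integrand_def[abs_def] g0_def using m by real_asymp
  qed
  show "(g0_integrand a b m \<longlongrightarrow> 0) at_top"
    unfolding g0_integrand_def[abs_def] g0_def using a by real_asymp
qed

lemma set_integral_g0_integrand_derivative:
  assumes a: "a \<ge> 0" and b: "b \<ge> 0" and m: "m > 0" and am: "a > 0 \<or> m > b"
  shows "(LBINT z:{0<..}. (m - b) / 2 * g0_integrand a b (m - 1) z - g0_integrand a b m z / 2
                          + a * b / 2 * g0_integrand a (b + 1) (m - 1) z) = 0"
proof (rule set_integral_derivative_vanishing_at_ends[where F = "g0_integrand a b m"])
  show "(g0_integrand a b m has_real_derivative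
          (m - b) / 2 * g0_integrand a b (m - 1) z - g0_integrand a b m z / 2
          + a * b / 2 * g0_integrand a (b + 1) (m - 1) z) (at z)" if "z > 0" for z
    using g0_integrand_has_real_derivative[OF a that] .
  show "isCont (\<lambda>z. (m - b) / 2 * g0_integrand a b (m - 1) z - g0_integrand a b m z / 2
                    + a * b / 2 * g0_integrand a (b + 1) (m - 1) z) z" if "z > 0" for z
    unfolding g0_integrand_def g0_def using a that by (intro continuous_intros) auto
  show "set_integrable lborel {0<..} (\<lambda>z. (m - b) / 2 * g0_integrand a b (m - 1) z
          - g0_integrand a b m z / 2 + a * b / 2 * g0_integrand a (b + 1) (m - 1) z)"
    using a b m am by (intro set_integral_add set_integral_diff set_integrable_mult_right
                         set_integrable_divide set_integrable_g0_integrand) auto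
qed (use g0_integrand_tendsto_zero[OF a m am] in auto)

lemma g0_moment_by_parts:
  assumes a: "a \<ge> 0" and b: "b \<ge> 0" and m: "m > 0" and am: "a > 0 \<or> m > b"
  shows "g0_moment a b m = (m - b) * g0_moment a b (m - 1) + a * b * g0_moment a (b + 1) (m - 1)"
proof -
  have i1: "set_integrable lborel {0<..} (\<lambda>z. (m - b) / 2 * g0_integrand a b (m - 1) z)"
    and i2: "set_integrable lborel {0<..} (\<lambda>z. g0_integrand a b m z / 2)"
    and i3: "set_integrable lborel {0<..} (\<lambda>z. a * b / 2 * g0_integrand a (b + 1) (m - 1) z)"
    using a b m am by (auto intro!: set_integrable_g0_integrand)
  have "0 = (LBINT z:{0<..}. (m - b) / 2 * g0_integrand a b (m - 1) z - g0_integrand a b m z / 2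
                             + a * b / 2 * g0_integrand a (b + 1) (m - 1) z)"
    using set_integral_g0_integrand_derivative[OF assms] ..
  also have "\<dots> = (LBINT z:{0<..}. (m - b) / 2 * g0_integrand a b (m - 1) z)
                   - (LBINT z:{0<..}. g0_integrand a b m z / 2)
                   + (LBINT z:{0<..}. a * b / 2 * g0_integrand a (b + 1) (m - 1) z)"
    using set_integral_add(2)[OF set_integral_diff(1)[OF i1 i2] i3] set_integral_diff(2)[OF i1 i2]
    by simp
  also have "\<dots> = (m - b) / 2 * g0_moment a b (m - 1) - g0_moment a b m / 2
                   + a * b / 2 * g0_moment a (b + 1) (m - 1)"
    unfolding g0_moment_def by simp
  finally show ?thesis
    by (simp add: field_simps)
qed

lemma g0_moment_plus_one_le:
  assumes a: "a \<ge> 0" and b: "b \<ge> 0" and e: "e > 0" and ae: "a > 0 \<or> e > b"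
  shows "g0_moment a (b + 1) e \<le> g0_moment a b (e - 1) / 2"
proof -
  have "(LBINT z:{0<..}. g0_integrand a (b + 1) e z) \<le> (LBINT z:{0<..}. g0_integrand a b (e - 1) z / 2)"
  proof (rule set_integral_mono)
    show "set_integrable lborel {0<..} (g0_integrand a (b + 1) e)"
      "set_integrable lborel {0<..} (\<lambda>z. g0_integrand a b (e - 1) z / 2)"
      using a b e ae by (auto intro!: set_integrable_g0_integrand)
    fix z :: real
    assume "z \<in> {0<..}"
    then have z: "z > 0"
      by simp
    have "g0 a (b + 1) z * (z / 2) \<le> g0 a (b + 1) z * ((a + z) / 2)"
      using a z unfolding g0_def by (intro mult_left_mono) auto
    then have "g0 a (b + 1) z * (z / 2) * ((z / 2) powr (e - 1) * exp (- z / 2))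
             \<le> g0 a (b + 1) z * ((a + z) / 2) * ((z / 2) powr (e - 1) * exp (- z / 2))"
      by (intro mult_right_mono) auto
    moreover have e: "(z / 2) powr e = (z / 2) * (z / 2) powr (e - 1)"
      using z by (intro powr_eq_mult_powr_diff_one) simp
    moreover have b: "g0 a b z = (a + z) * g0 a (b + 1) z"
      using a z by (intro g0_eq_mult_g0_plus_one) simp
    ultimately show "g0_integrand a (b + 1) e z \<le> g0_integrand a b (e - 1) z / 2"
      unfolding g0_integrand_def e b by (simp add: field_simps)
  qed
  then show ?thesis
    unfolding g0_moment_def by simp
qed

section \<open>The sequences \<open>w\<^sub>k\<close>\<close>

lemma wk_eq_g0_moment:
  "wk a b p k n = g0_moment a b (real n + real p / 2 + real k - 1) / (2 * Gamma (real n + real p / 2))"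
  unfolding wk_def g0_moment_def g0_integrand_def by (simp only: set_integral_divide_zero)

lemma wk_Suc:
  assumes "p > 0"
  shows "wk a b p (Suc k) n = (real n + real p / 2) * wk a b p k (Suc n)"
proof -
  define m where "m = real n + real p / 2"
  have m: "m > 0"
    unfolding m_def using assms by simp
  then have "Gamma (m + 1) = m * Gamma m"
    using Gamma_plus1[of m] nonpos_Ints_nonpos by force
  moreover have "real (Suc n) + real p / 2 = m + 1"
    and "real (Suc n) + real p / 2 + real k - 1 = m + real k"
    and "real n + real p / 2 + real (Suc k) - 1 = m + real k"
    unfolding m_def by simp_all
  ultimately show ?thesis
    unfolding wk_eq_g0_moment m_def[symmetric] using m by (simp add: field_simps)
qed

context
  fixes a b :: real and p :: nat
  assumes p_pos: "p > 0" and a_nonneg: "a \<ge> 0" and b_nonneg: "b \<ge> 0"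
    and wk0_integrable: "a > 0 \<or> b < real p / 2"
begin

lemma wk0_pos: "wk a b p 0 n > 0"
  unfolding wk_eq_g0_moment using p_pos a_nonneg b_nonneg wk0_integrable
  by (intro divide_pos_pos g0_moment_pos) (auto intro!: Gamma_real_pos)

lemma wk0_recursion:
  fixes n :: nat
  defines "m \<equiv> real n + real p / 2"
  shows "m * wk a b p 0 (Suc n)
           = (m - b) * wk a b p 0 n + a * b * g0_moment a (b + 1) (m - 1) / (2 * Gamma m)"
proof -
  have Gamma_m: "Gamma m > 0"
    unfolding m_def using p_pos by (intro Gamma_real_pos) simp
  have "m * wk a b p 0 (Suc n) = wk a b p 1 n"
    using wk_Suc[OF p_pos, of a b 0 n] unfolding m_def by simp
  also have "\<dots> = g0_moment a b m / (2 * Gamma m)"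
    unfolding wk_eq_g0_moment m_def by simp
  also have "g0_moment a b m = (m - b) * g0_moment a b (m - 1) + a * b * g0_moment a (b + 1) (m - 1)"
    using p_pos a_nonneg b_nonneg wk0_integrable unfolding m_def
    by (intro g0_moment_by_parts) auto
  also have "g0_moment a b (m - 1) = 2 * Gamma m * wk a b p 0 n"
    using Gamma_m unfolding wk_eq_g0_moment m_def by simp
  finally show ?thesis
    using Gamma_m by (simp add: add_divide_distrib)
qed

lemma wk0_lower_step:
  fixes n :: nat
  defines "m \<equiv> real n + real p / 2"
  shows "(m - b) * wk a b p 0 n \<le> m * wk a b p 0 (Suc n)"
  unfolding m_def wk0_recursion using p_pos a_nonneg b_nonneg
  by (simp add: g0_moment_nonneg Gamma_real_pos)

lemma wk0_correction_le:
  fixes n :: nat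
  defines "m \<equiv> real n + real p / 2"
  assumes n: "n \<ge> 1"
  shows "a * b * g0_moment a (b + 1) (m - 1) / (2 * Gamma m) \<le> a * b * wk a b p 0 (n - 1) / (2 * (m - 1))"
proof -
  have m1: "m - 1 > 0"
    unfolding m_def using n p_pos by simp
  have Gamma_m: "Gamma m = (m - 1) * Gamma (m - 1)"
    using Gamma_plus1[of "m - 1"] m1 nonpos_Ints_nonpos by force
  have Gamma_pos: "Gamma (m - 1) > 0"
    using m1 by (rule Gamma_real_pos)
  have "a * g0_moment a (b + 1) (m - 1) \<le> a * (g0_moment a b (m - 1 - 1) / 2)"
  proof (cases "a = 0")
    case False
    then show ?thesis
      using a_nonneg b_nonneg m1 by (intro mult_left_mono g0_moment_plus_one_le) auto
  qed simp
  moreover have "g0_moment a b (m - 1 - 1) = 2 * Gamma (m - 1) * wk a b p 0 (n - 1)"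
  proof -
    have "real (n - 1) + real p / 2 = m - 1" "real (n - 1) + real p / 2 + real 0 - 1 = m - 1 - 1"
      using n unfolding m_def by (simp_all add: of_nat_diff)
    then show ?thesis
      using Gamma_pos unfolding wk_eq_g0_moment by simp
  qed
  ultimately have "a * g0_moment a (b + 1) (m - 1) \<le> a * (Gamma (m - 1) * wk a b p 0 (n - 1))"
    by simp
  then have "b / (2 * Gamma m) * (a * g0_moment a (b + 1) (m - 1))
           \<le> b / (2 * Gamma m) * (a * (Gamma (m - 1) * wk a b p 0 (n - 1)))"
    by (rule mult_left_mono) (use b_nonneg m1 Gamma_pos Gamma_m in auto)
  moreover have "b / (2 * Gamma m) * (a * g0_moment a (b + 1) (m - 1))
      = a * b * g0_moment a (b + 1) (m - 1) / (2 * Gamma m)"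
    by (simp add: mult_ac)
  moreover have "b / (2 * Gamma m) * (a * (Gamma (m - 1) * wk a b p 0 (n - 1)))
      = a * b * wk a b p 0 (n - 1) / (2 * (m - 1))"
  proof -
    have cancel: "b / (2 * (d * G)) * (a * (G * w)) = a * b * w / (2 * d)"
      if "d > 0" "G > 0" for d G w :: real
      using that by (simp add: field_simps)
    show ?thesis
      unfolding Gamma_m by (rule cancel[OF m1 Gamma_pos])
  qed
  ultimately show ?thesis
    by linarith
qed

lemma wk0_upper_step:
  fixes n :: nat
  defines "m \<equiv> real n + real p / 2"
  assumes "n \<ge> 1"
  shows "m * wk a b p 0 (Suc n) \<le> (m - b) * wk a b p 0 n + a * b * wk a b p 0 (n - 1) / (2 * (m - 1))"
  using wk0_correction_le[OF assms(2)] unfolding m_def wk0_recursion by simp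

lemma ratio_expansion_wk0: "ratio_expansion (wk a b p 0) (real p / 2) (- b)"
  unfolding ratio_expansion_def
proof (intro conjI allI exI[of _ "2 * a * b"])
  show "wk a b p 0 n > 0" for n
    by (rule wk0_pos)
  show "2 * a * b \<ge> 0"
    using a_nonneg b_nonneg by simp
  show "\<forall>\<^sub>F n in sequentially.
          \<bar>ratio_residual (wk a b p 0) (real p / 2) (- b) n\<bar>
            \<le> 2 * a * b * wk a b p 0 n / (real n + real p / 2)"
    using eventually_ge_at_top[of "nat \<lceil>2 * b\<rceil> + 2"]
  proof eventually_elim
    case (elim n)
    define m where "m = real n + real p / 2"
    have n: "n \<ge> 1" and m: "m \<ge> 2" "m - 1 \<ge> 2 * b"
      using elim p_pos unfolding m_def by linarith+
    have "(m - 1 - b) * wk a b p 0 (n - 1) \<le> (m - 1) * wk a b p 0 n"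
      using wk0_lower_step[of "n - 1"] n unfolding m_def by (simp add: of_nat_diff algebra_simps)
    moreover have "(m - 1) / 2 * wk a b p 0 (n - 1) \<le> (m - 1 - b) * wk a b p 0 (n - 1)"
      using m wk0_pos[of "n - 1"] by (intro mult_right_mono) auto
    ultimately have "(m - 1) * wk a b p 0 (n - 1) \<le> (m - 1) * (2 * wk a b p 0 n)"
      by linarith
    then have pred_le: "wk a b p 0 (n - 1) \<le> 2 * wk a b p 0 n"
      using m by simp
    have "a * b * wk a b p 0 (n - 1) / (2 * (m - 1)) \<le> a * b * (2 * wk a b p 0 n) / (2 * (m - 1))"
      using pred_le a_nonneg b_nonneg m by (intro divide_right_mono mult_left_mono) auto
    also have "\<dots> \<le> 2 * a * b * wk a b p 0 n / m"
      using m a_nonneg b_nonneg wk0_pos[of n] by (simp add: field_simps mult_left_mono)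
    finally have "m * wk a b p 0 (Suc n) - (m - b) * wk a b p 0 n \<le> 2 * a * b * wk a b p 0 n / m"
      using wk0_upper_step[OF n] unfolding m_def by simp
    moreover have "(m - b) * wk a b p 0 n \<le> m * wk a b p 0 (Suc n)"
      using wk0_lower_step[of n] unfolding m_def by simp
    ultimately show ?case
      unfolding m_def ratio_residual_def by simp
  qed
qed

lemma ratio_expansion_wk: "ratio_expansion (wk a b p k) (real p / 2) (real k - b)"
proof (induction k)
  case 0
  then show ?case
    using ratio_expansion_wk0 by simp
next
  case (Suc k)
  have "wk a b p (Suc k) = (\<lambda>n. (real n + real p / 2) * wk a b p k (Suc n))"
    using wk_Suc[OF p_pos] by (intro ext)
  moreover have "ratio_expansion (\<lambda>n. (real n + real p / 2) * wk a b p k (Suc n)) (real p / 2) (real k - b + 1)"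
    using p_pos Suc by (intro ratio_expansion_shift) auto
  ultimately show ?case
    by (simp add: algebra_simps)
qed

lemma wk_pos: "wk a b p k n > 0"
  using ratio_expansion_wk[of k] unfolding ratio_expansion_def by blast

lemma summable_poisson_wk:
  assumes "l > 0"
  shows "summable (\<lambda>n. pmf (poisson_pmf l) n * wk a b p k n)"
proof -
  obtain L where "\<And>n. wk a b p k (Suc n) \<le> L * wk a b p k n"
    using ratio_expansion_ratio_bounded[OF ratio_expansion_wk] by metis
  then show ?thesis
    using assms wk_pos by (intro summable_poisson_mult) (auto intro: less_imp_le)
qed

lemma Ew_eq_suminf:
  assumes "y > 0"
  shows "Ew a b p k y = (\<Sum>n. pmf (poisson_pmf (y / 2)) n * wk a b p k n)"
  unfolding Ew_def using assms wk_pos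
  by (intro expectation_eq_suminf_nat summable_poisson_wk) (auto intro: less_imp_le)

lemma Ew_ratio_estimate:
  assumes k: "k \<ge> 1"
  obtains M L where "M > 0" and "L > 0"
    and "\<And>y. y > 0 \<Longrightarrow>
           \<bar>Ew a b p k y / Ew a b p (k - 1) y - (real p / 2 + 2 * (real k - b - 1) + y / 2)\<bar> \<le> M"
    and "\<And>y. y > 0 \<Longrightarrow>
           \<bar>Ew a b p k y / Ew a b p (k - 1) y - (real p / 2 + 2 * (real k - b - 1) + y / 2)\<bar>
             \<le> M * L / (y / 2)"
proof -
  define V where "V = wk a b p (k - 1)"
  define C where "C = real p / 2 + 2 * (real k - b - 1)"
  have V: "ratio_expansion V (real p / 2) (real (k - 1) - b)"
    unfolding V_def by (rule ratio_expansion_wk)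
  have "real p / 2 + 2 * (real (k - 1) - b) = C"
    unfolding C_def using k by (simp add: of_nat_diff)
  then obtain M where M: "M > 0"
    "\<And>n. \<bar>(real n + real p / 2) * V (Suc n) - real n * V (n - 1) - C * V n\<bar> \<le> M * V n / (real n + 1)"
    using ratio_expansion_second_order[OF V] by metis
  obtain L where L: "L > 0" "\<And>n. V n \<le> L * V (Suc n)"
    using ratio_expansion_ratio_bounded[OF V] by metis
  have wk_k: "wk a b p k = (\<lambda>n. (real n + real p / 2) * V (Suc n))"
    using wk_Suc[OF p_pos, of a b "k - 1"] k unfolding V_def by (intro ext) simp
  have "\<bar>Ew a b p k y / Ew a b p (k - 1) y - (C + y / 2)\<bar> \<le> M
        \<and> \<bar>Ew a b p k y / Ew a b p (k - 1) y - (C + y / 2)\<bar> \<le> M * L / (y / 2)" if y: "y > 0" for y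
  proof -
    have l: "y / 2 > 0"
      using y by simp
    have "Ew a b p k y / Ew a b p (k - 1) y - (C + y / 2)
        = (\<Sum>n. pmf (poisson_pmf (y / 2)) n * ((real n + real p / 2) * V (Suc n)))
            / (\<Sum>n. pmf (poisson_pmf (y / 2)) n * V n) - (y / 2 + C)"
      unfolding Ew_eq_suminf[OF y] wk_k V_def by simp
    moreover have "summable (\<lambda>n. pmf (poisson_pmf (y / 2)) n * V n)"
      using summable_poisson_wk[OF l, of "k - 1"] unfolding V_def .
    moreover have "summable (\<lambda>n. pmf (poisson_pmf (y / 2)) n * ((real n + real p / 2) * V (Suc n)))"
      using summable_poisson_wk[OF l, of k] unfolding wk_k .
    moreover have "V n > 0" for n
      unfolding V_def by (rule wk_pos)
    ultimately show ?thesis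
      using poisson_ratio_estimate[OF l _ _ _ less_imp_le[OF L(1)] L(2) M(2)] by (simp add: add.commute)
  qed
  with M(1) L(1) show ?thesis
    using that unfolding C_def by (simp add: add.assoc)
qed

lemma Ew_ratio_expansion:
  assumes "k \<ge> 1"
  shows "\<exists>(\<psi> :: real \<Rightarrow> real) (d :: real).
           bounded (\<psi> ` {0<..}) \<and> 0 < d \<and>
           (\<forall>y > 0. \<bar>\<psi> y\<bar> \<le> d / y \<and>
              Ew a b p k y / Ew a b p (k - 1) y
                = real p / 2 + 2 * (real k - b - 1) + y / 2 + \<psi> y)"
proof -
  obtain M L where "M > 0" "L > 0"
    and bound: "\<And>y. y > 0 \<Longrightarrow>
      \<bar>Ew a b p k y / Ew a b p (k - 1) y - (real p / 2 + 2 * (real k - b - 1) + y / 2)\<bar> \<le> M"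
    and decay: "\<And>y. y > 0 \<Longrightarrow>
      \<bar>Ew a b p k y / Ew a b p (k - 1) y - (real p / 2 + 2 * (real k - b - 1) + y / 2)\<bar> \<le> M * L / (y / 2)"
    using Ew_ratio_estimate[OF assms] by metis
  define \<psi> where "\<psi> y = Ew a b p k y / Ew a b p (k - 1) y - (real p / 2 + 2 * (real k - b - 1) + y / 2)" for y
  have "bounded (\<psi> ` {0<..})"
    unfolding bounded_iff \<psi>_def using bound by (intro exI[of _ M]) auto
  moreover have "0 < 2 * M * L"
    using \<open>M > 0\<close> \<open>L > 0\<close> by simp
  moreover have "\<bar>\<psi> y\<bar> \<le> 2 * M * L / y \<and>
      Ew a b p k y / Ew a b p (k - 1) y = real p / 2 + 2 * (real k - b - 1) + y / 2 + \<psi> y"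
    if "y > 0" for y
    using decay[OF that] unfolding \<psi>_def by (simp add: mult_ac)
  ultimately show ?thesis
    by blast
qed

end

theorem propositionA7:
  fixes p :: nat and a b :: real
  assumes "p \<ge> 3" and "a \<ge> 0" and "b > 0"
    and "(a > 0 \<and> real p / 2 - 1 \<le> b \<and> b \<le> real p / 2) \<or>
         (a = 0 \<and> real p / 2 - 1 \<le> b \<and> b < real p / 2)"
  shows "\<forall>k \<in> {1, 2, 3}. \<exists>(\<psi> :: real \<Rightarrow> real) (d :: real).
           bounded (\<psi> ` {0<..}) \<and> 0 < d \<and>
           (\<forall>y > 0. \<bar>\<psi> y\<bar> \<le> d / y \<and>
              Ew a b p k y / Ew a b p (k - 1) y
                = real p / 2 + 2 * (real k - b - 1) + y / 2 + \<psi> y)"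
proof (intro ballI)
  fix k :: nat
  assume "k \<in> {1, 2, 3}"
  moreover have "p > 0" and "a > 0 \<or> b < real p / 2"
    using assms(1,4) by auto
  ultimately show "\<exists>(\<psi> :: real \<Rightarrow> real) (d :: real).
           bounded (\<psi> ` {0<..}) \<and> 0 < d \<and>
           (\<forall>y > 0. \<bar>\<psi> y\<bar> \<le> d / y \<and>
              Ew a b p k y / Ew a b p (k - 1) y
                = real p / 2 + 2 * (real k - b - 1) + y / 2 + \<psi> y)"
    using assms(2,3) by (intro Ew_ratio_expansion) auto
qed

end
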